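(* Let $\mathcal H=\mathcal H_A\otimes\mathcal H_B$ be finite-dimensional, with local Hamiltonians $H_X(t_i)=\sum_{l_X}E^i_{l_X}\Pi^i_{l_X}$, $H_X(t_f)=\sum_{k_X}E^f_{k_X}\Pi^f_{k_X}$ ($X=A,B$), $\beta>0$, local thermal states $\gamma^X_{\beta,i}=e^{-\beta H_X(t_i)}/\mathcal Z^X_{\beta,i}$, $\gamma^X_{\beta,f}=e^{-\beta H_X(t_f)}/\mathcal Z^X_{\beta,f}$, $\gamma_{\beta,i}=\gamma^A_{\beta,i}\otimes\gamma^B_{\beta,i}$, $\gamma_{\beta,f}=\gamma^A_{\beta,f}\otimes\gamma^B_{\beta,f}$, and $\Delta F=-\beta^{-1}\ln\big(\mathcal Z^A_{\beta,f}\mathcal Z^B_{\beta,f}/(\mathcal Z^A_{\beta,i}\mathcal Z^B_{\beta,i})\big)$. Let $\Phi[X]=\sum_\alpha A_\alpha XA_\alpha^\dagger$ be a CPTP map on $\mathcal H$ with a full-rank fixed point $\pi$, and $\tilde\Phi[X]=\sum_\alpha\tilde A_\alpha X\tilde A_\alpha^\dagger$ with $\tilde A_\alpha=\pi^{1/2}A_\alpha^\dagger\pi^{-1/2}$. Let $\rho_i=\gamma_{\beta,i}+\mathfrak E_{AB}$ and $\tilde\rho_i=\gamma_{\beta,f}+\tilde{\mathfrak E}_{AB}$ be density operators, with $\mathfrak E_{AB},\tilde{\mathfrak E}_{AB}$ Hermitian and having vanishing partial traces over $A$ and over $B$. Write $\mathbf l=(l_A,l_B)$, $\mathbf k=(k_A,k_B)$,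 $\Pi^i_{\mathbf l}=\Pi^i_{l_A}\otimes\Pi^i_{l_B}$, $\Pi^f_{\mathbf k}=\Pi^f_{k_A}\otimes\Pi^f_{k_B}$ and, for an operator $\mathcal A$, $p^i_{\mathbf l}(\mathcal A)=\mathrm{Tr}(\mathcal A\Pi^i_{\mathbf l})$, $p^f_{\mathbf k}(\mathcal A)=\mathrm{Tr}(\Phi[\mathcal A]\Pi^f_{\mathbf k})$, $\tilde p^i_{\mathbf k}(\mathcal A)=\mathrm{Tr}(\mathcal A\Pi^f_{\mathbf k})$, $\tilde p^f_{\mathbf l}(\mathcal A)=\mathrm{Tr}(\tilde\Phi[\mathcal A]\Pi^i_{\mathbf l})$; $P_\Gamma(\mathbf l,\mathbf k)=p^i_{\mathbf l}(\rho_i)p^f_{\mathbf k}(\rho_i)$, $P_{\tilde\Gamma}(\mathbf k,\mathbf l)=\tilde p^i_{\mathbf k}(\tilde\rho_i)\tilde p^f_{\mathbf l}(\tilde\rho_i)$. Define $\Psi^{(i)}_{\mathbf l}=\ln\big(1+\tfrac{p^i_{\mathbf l}(\mathfrak E_{AB})}{p^i_{\mathbf l}(\gamma_{\beta,i})}\big)$, $\Psi^{(f)}_{\mathbf k}=\ln\big(1+\tfrac{p^f_{\mathbf k}(\mathfrak E_{AB})}{p^f_{\mathbf k}(\gamma_{\beta,i})}\big)$, $\tilde\Psi^{(i)}_{\mathbf k}=\ln\big(1+\tfrac{\tilde p^i_{\mathbf k}(\tilde{\mathfrak E}_{AB})}{\tilde p^i_{\mathbf k}(\gamma_{\beta,f})}\big)$,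 $\tilde\Psi^{(f)}_{\mathbf l}=\ln\big(1+\tfrac{\tilde p^f_{\mathbf l}(\tilde{\mathfrak E}_{AB})}{\tilde p^f_{\mathbf l}(\gamma_{\beta,f})}\big)$, $\Delta\Psi_{\mathbf l,\mathbf k}=\Psi^{(i)}_{\mathbf l}+\Psi^{(f)}_{\mathbf k}-\tilde\Psi^{(i)}_{\mathbf k}-\tilde\Psi^{(f)}_{\mathbf l}$ and $\Delta\sigma_{\mathbf l,\mathbf k}=\ln p^f_{\mathbf k}(\gamma_{\beta,i})-\ln\tilde p^f_{\mathbf l}(\gamma_{\beta,f})$. Then, for every $(\mathbf l,\mathbf k)$ for which these quantities are well defined, $$\ln\frac{P_\Gamma(\mathbf l,\mathbf k)}{P_{\tilde\Gamma}(\mathbf k,\mathbf l)}=\beta(\Delta E_{\mathbf l,\mathbf k}-\Delta F)+\Delta\sigma_{\mathbf l,\mathbf k}+\Delta\Psi_{\mathbf l,\mathbf k},\qquad \Delta E_{\mathbf l,\mathbf k}=E^f_{k_A}+E^f_{k_B}-E^i_{l_A}-E^i_{l_B}.$$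
   Context: $\Phi$ and $\tilde\Phi$ are extended linearly to arbitrary (not necessarily positive) operators.
   Formalization: Each eigenprojector $\Pi^i_{l_X}$ and $\Pi^f_{k_X}$ in the decompositions of $H_X(t_i)$ and $H_X(t_f)$ is rank one (trace 1), though the energies $E^i_{l_X}$, $E^f_{k_X}$ may repeat. Apart from conventions, each condition added here is assumed in the paper as well or is needed for the statement above to hold. *)

theory Defs
  imports "Jordan_Normal_Form.Schur_Decomposition"
begin

definition trace :: "complex mat \<Rightarrow> complex" where
  "trace A = (\<Sum>i<dim_row A. A $$ (i,i))"

text \<open>Kronecker (tensor) product of matrices; the basis index (a,b) of H_A (x) H_B
  is a * dim_B + b.\<close>
definition kron :: "complex mat \<Rightarrow> complex mat \<Rightarrow> complex mat" where
  "kron A B = mat (dim_row A * dim_row B) (dim_col A * dim_col B)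
     (\<lambda>(i,j). A $$ (i div dim_row B, j div dim_col B) * B $$ (i mod dim_row B, j mod dim_col B))"

definition ptrace_A :: "nat \<Rightarrow> nat \<Rightarrow> complex mat \<Rightarrow> complex mat" where
  "ptrace_A dA dB M = mat dB dB (\<lambda>(i,j). \<Sum>a<dA. M $$ (a * dB + i, a * dB + j))"

definition ptrace_B :: "nat \<Rightarrow> nat \<Rightarrow> complex mat \<Rightarrow> complex mat" where
  "ptrace_B dA dB M = mat dA dA (\<lambda>(a,b). \<Sum>i<dB. M $$ (a * dB + i, b * dB + i))"

definition msum :: "nat \<Rightarrow> ('i::finite \<Rightarrow> complex mat) \<Rightarrow> complex mat" where
  "msum d f = mat d d (\<lambda>(i,j). \<Sum>x\<in>UNIV. f x $$ (i,j))"

definition hermitian :: "nat \<Rightarrow> complex mat \<Rightarrow> bool" where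
  "hermitian d A \<longleftrightarrow> A \<in> carrier_mat d d \<and> mat_adjoint A = A"

definition psd :: "nat \<Rightarrow> complex mat \<Rightarrow> bool" where
  "psd d A \<longleftrightarrow> hermitian d A \<and> (\<forall>v \<in> carrier_vec d. 0 \<le> Re ((A *\<^sub>v v) \<bullet>c v))"

definition density :: "nat \<Rightarrow> complex mat \<Rightarrow> bool" where
  "density d \<rho> \<longleftrightarrow> psd d \<rho> \<and> trace \<rho> = 1"

text \<open>H = sum_l E_l Pi_l, with Pi_l a complete family of mutually orthogonal
  rank-one orthogonal projectors (non-degenerate spectral decomposition).\<close>
definition spectral_decomp :: "nat \<Rightarrow> complex mat \<Rightarrow> ('l::finite \<Rightarrow> real) \<Rightarrow> ('l \<Rightarrow> complex mat) \<Rightarrow> bool" where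
  "spectral_decomp d H E P \<longleftrightarrow>
     H \<in> carrier_mat d d \<and>
     (\<forall>l. P l \<in> carrier_mat d d \<and> mat_adjoint (P l) = P l \<and> P l * P l = P l \<and> trace (P l) = 1) \<and>
     (\<forall>l l'. l \<noteq> l' \<longrightarrow> P l * P l' = 0\<^sub>m d d) \<and>
     msum d P = 1\<^sub>m d \<and>
     H = msum d (\<lambda>l. complex_of_real (E l) \<cdot>\<^sub>m P l)"

definition exp_mbeta :: "nat \<Rightarrow> real \<Rightarrow> ('l::finite \<Rightarrow> real) \<Rightarrow> ('l \<Rightarrow> complex mat) \<Rightarrow> complex mat" where
  "exp_mbeta d \<beta> E P = msum d (\<lambda>l. complex_of_real (exp (- \<beta> * E l)) \<cdot>\<^sub>m P l)"

definition partition_fn :: "nat \<Rightarrow> real \<Rightarrow> ('l::finite \<Rightarrow> real) \<Rightarrow> ('l \<Rightarrow> complex mat) \<Rightarrow> real" where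
  "partition_fn d \<beta> E P = Re (trace (exp_mbeta d \<beta> E P))"

definition thermal :: "nat \<Rightarrow> real \<Rightarrow> ('l::finite \<Rightarrow> real) \<Rightarrow> ('l \<Rightarrow> complex mat) \<Rightarrow> complex mat" where
  "thermal d \<beta> E P = complex_of_real (1 / partition_fn d \<beta> E P) \<cdot>\<^sub>m exp_mbeta d \<beta> E P"

definition kraus_map :: "nat \<Rightarrow> ('a::finite \<Rightarrow> complex mat) \<Rightarrow> complex mat \<Rightarrow> complex mat" where
  "kraus_map d K X = msum d (\<lambda>\<alpha>. K \<alpha> * X * mat_adjoint (K \<alpha>))"

definition cptp_kraus :: "nat \<Rightarrow> ('a::finite \<Rightarrow> complex mat) \<Rightarrow> bool" where
  "cptp_kraus d K \<longleftrightarrow> (\<forall>\<alpha>. K \<alpha> \<in> carrier_mat d d) \<and>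
     msum d (\<lambda>\<alpha>. mat_adjoint (K \<alpha>) * K \<alpha>) = 1\<^sub>m d"

text \<open>Tr(A Pi) (real part; it is real for the Hermitian operators considered).\<close>
definition prob_tr :: "complex mat \<Rightarrow> complex mat \<Rightarrow> real" where
  "prob_tr X Q = Re (trace (X * Q))"

end

theory Submission
  imports Defs
begin

text \<open>Every probability in the ratio is linear in the state, so for \<rho> = \<gamma> + E it factors as
  p(\<gamma>) (1 + p(E) / p(\<gamma>)); the logarithms of the second factors make up \<Delta>\<Psi>. The Kraus maps
  enter only through p^f(\<gamma>_i) and p~^f(\<gamma>_f), which form \<Delta>\<sigma>. What remains are the
  probabilities of product eigenprojectors in thermal product states: these are Boltzmann weights
  exp(-\<beta> E) / Z, and their log-ratio is \<beta> (\<Delta>E - \<Delta>F).\<close>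

lemma sum_lessThan_mult_nat:
  fixes f :: "nat \<Rightarrow> 'a::comm_monoid_add"
  shows "(\<Sum>i<m * n. f i) = (\<Sum>a<m. \<Sum>b<n. f (a * n + b))"
proof -
  have "(\<Sum>b<n. f (a * n + b)) = (\<Sum>i\<in>{a * n..<a * n + n}. f i)" for a
    using sum.shift_bounds_nat_ivl[of f 0 "a * n" n] by (simp add: lessThan_atLeast0 add.commute)
  then show ?thesis by (simp add: sum.nat_group)
qed

lemma kron_carrier_mat:
  "A \<in> carrier_mat m m \<Longrightarrow> B \<in> carrier_mat n n \<Longrightarrow> kron A B \<in> carrier_mat (m * n) (m * n)"
  by (auto simp: kron_def)

lemma mat_adjoint_carrier_mat: "A \<in> carrier_mat n m \<Longrightarrow> mat_adjoint A \<in> carrier_mat m n"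
  by (auto simp: mat_adjoint_def mat_of_rows_def)

lemma msum_carrier_mat [simp]: "msum d f \<in> carrier_mat d d"
  by (simp add: msum_def)

lemma kraus_map_carrier_mat [simp]: "kraus_map d K X \<in> carrier_mat d d"
  by (simp add: kraus_map_def)

lemma trace_add:
  "A \<in> carrier_mat d d \<Longrightarrow> B \<in> carrier_mat d d \<Longrightarrow> trace (A + B) = trace A + trace B"
  by (simp add: trace_def sum.distrib)

lemma trace_smult: "A \<in> carrier_mat d d \<Longrightarrow> trace (c \<cdot>\<^sub>m A) = c * trace A"
  by (simp add: trace_def sum_distrib_left)

lemma trace_msum:
  assumes "\<And>x. f x \<in> carrier_mat d d"
  shows "trace (msum d f) = (\<Sum>x\<in>UNIV. trace (f x))"
proof -
  have "dim_row (f x) = d" for x using assms[of x] by simp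
  then show ?thesis by (simp add: trace_def msum_def sum.swap[of _ "{..<d}"])
qed

lemma msum_add:
  assumes "\<And>x. f x \<in> carrier_mat d d" "\<And>x. g x \<in> carrier_mat d d"
  shows "msum d (\<lambda>x. f x + g x) = msum d f + msum d g"
proof -
  have "dim_row (g x) = d" "dim_col (g x) = d" for x
    using assms(2)[of x] by auto
  then show ?thesis by (intro eq_matI) (auto simp: msum_def sum.distrib)
qed

lemma msum_mult_right:
  assumes f: "\<And>x. f x \<in> carrier_mat d d" and Q: "Q \<in> carrier_mat d d"
  shows "msum d f * Q = msum d (\<lambda>x. f x * Q)"
proof (rule eq_matI)
  fix i j assume "i < dim_row (msum d (\<lambda>x. f x * Q))" "j < dim_col (msum d (\<lambda>x. f x * Q))"
  then have i: "i < d" and j: "j < d" by (simp_all add: msum_def)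
  have dims: "dim_row (f x) = d" "dim_col (f x) = d" for x using f[of x] by auto
  have "(msum d f * Q) $$ (i, j) = (\<Sum>k<d. (\<Sum>x\<in>UNIV. f x $$ (i, k)) * Q $$ (k, j))"
    using i j Q by (simp add: msum_def scalar_prod_def lessThan_atLeast0)
  also have "\<dots> = (\<Sum>x\<in>UNIV. \<Sum>k<d. f x $$ (i, k) * Q $$ (k, j))"
    by (simp add: sum_distrib_right sum.swap[of _ "{..<d}"])
  also have "\<dots> = msum d (\<lambda>x. f x * Q) $$ (i, j)"
    using i j Q dims by (simp add: msum_def scalar_prod_def lessThan_atLeast0)
  finally show "(msum d f * Q) $$ (i, j) = msum d (\<lambda>x. f x * Q) $$ (i, j)" .
qed (use Q in \<open>simp_all add: msum_def\<close>)

lemma msum_delta: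
  assumes "M \<in> carrier_mat d d"
  shows "msum d (\<lambda>x. if x = l then M else 0\<^sub>m d d) = M"
  using assms by (intro eq_matI) (auto simp: msum_def if_distrib[of "\<lambda>A. A $$ _"] cong: if_cong)

lemma trace_kron_mult:
  assumes A: "A \<in> carrier_mat m m" and C: "C \<in> carrier_mat m m"
    and B: "B \<in> carrier_mat n n" and D: "D \<in> carrier_mat n n"
  shows "trace (kron A B * kron C D) = trace (A * C) * trace (B * D)"
proof -
  have "trace (kron A B * kron C D)
      = (\<Sum>i<m * n. \<Sum>j<m * n. (A $$ (i div n, j div n) * C $$ (j div n, i div n))
                              * (B $$ (i mod n, j mod n) * D $$ (j mod n, i mod n)))"
    using A B C D by (simp add: trace_def kron_def scalar_prod_def lessThan_atLeast0 mult_ac)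
  also have "\<dots> = (\<Sum>a<m. \<Sum>b<n. \<Sum>c<m. \<Sum>e<n. (A $$ (a, c) * C $$ (c, a)) * (B $$ (b, e) * D $$ (e, b)))"
    by (simp add: sum_lessThan_mult_nat)
  also have "\<dots> = (\<Sum>a<m. \<Sum>c<m. A $$ (a, c) * C $$ (c, a)) * (\<Sum>b<n. \<Sum>e<n. B $$ (b, e) * D $$ (e, b))"
    by (simp add: sum_distrib_left sum_distrib_right sum.swap[of _ "{..<n}" "{..<m}"])
  also have "\<dots> = trace (A * C) * trace (B * D)"
    using A B C D by (simp add: trace_def scalar_prod_def lessThan_atLeast0)
  finally show ?thesis .
qed

lemma prob_tr_add:
  assumes "X \<in> carrier_mat d d" "Y \<in> carrier_mat d d" "Q \<in> carrier_mat d d"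
  shows "prob_tr (X + Y) Q = prob_tr X Q + prob_tr Y Q"
  using assms by (simp add: prob_tr_def add_mult_distrib_mat[of _ d d] trace_add[of _ d])

lemma kraus_map_add:
  assumes K: "\<And>\<alpha>. K \<alpha> \<in> carrier_mat d d" and X: "X \<in> carrier_mat d d" and Y: "Y \<in> carrier_mat d d"
  shows "kraus_map d K (X + Y) = kraus_map d K X + kraus_map d K Y"
proof -
  have carrier: "K \<alpha> * Z * mat_adjoint (K \<alpha>) \<in> carrier_mat d d" if "Z \<in> carrier_mat d d" for \<alpha> Z
    using K[of \<alpha>] mat_adjoint_carrier_mat[OF K[of \<alpha>]] that by (meson mult_carrier_mat)
  have "K \<alpha> * (X + Y) * mat_adjoint (K \<alpha>) = K \<alpha> * X * mat_adjoint (K \<alpha>) + K \<alpha> * Y * mat_adjoint (K \<alpha>)" for \<alpha>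
    using K[of \<alpha>] mat_adjoint_carrier_mat[OF K[of \<alpha>]] X Y
    by (simp add: mult_add_distrib_mat[of _ d d] add_mult_distrib_mat[of _ d d])
  then show ?thesis
    unfolding kraus_map_def by (simp add: msum_add[of _ d] carrier X Y)
qed

lemma spectral_decomp_projector:
  assumes "spectral_decomp d H E P"
  shows "P l \<in> carrier_mat d d" and "trace (P l) = 1" and "P l * P l = P l"
    and "l' \<noteq> l \<Longrightarrow> P l' * P l = 0\<^sub>m d d"
  using assms by (auto simp: spectral_decomp_def)

lemma partition_fn_spectral:
  assumes "spectral_decomp d H E P"
  shows "partition_fn d \<beta> E P = (\<Sum>l\<in>UNIV. exp (- \<beta> * E l))"
proof -
  have "trace (exp_mbeta d \<beta> E P) = (\<Sum>l\<in>UNIV. complex_of_real (exp (- \<beta> * E l)))"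
    unfolding exp_mbeta_def using spectral_decomp_projector[OF assms]
    by (simp add: trace_msum[of _ d] trace_smult[of _ d])
  then show ?thesis by (simp add: partition_fn_def)
qed

lemma partition_fn_pos:
  assumes "spectral_decomp d H (E :: 'l::finite \<Rightarrow> real) P"
  shows "0 < partition_fn d \<beta> E P"
  unfolding partition_fn_spectral[OF assms] by (intro sum_pos) auto

lemma thermal_carrier_mat [simp]: "thermal d \<beta> E P \<in> carrier_mat d d"
  by (simp add: thermal_def exp_mbeta_def)

lemma exp_mbeta_mult_projector:
  assumes "spectral_decomp d H E P"
  shows "exp_mbeta d \<beta> E P * P l = complex_of_real (exp (- \<beta> * E l)) \<cdot>\<^sub>m P l"
proof -
  note P = spectral_decomp_projector[OF assms]
  have "exp_mbeta d \<beta> E P * P l = msum d (\<lambda>x. (complex_of_real (exp (- \<beta> * E x)) \<cdot>\<^sub>m P x) * P l)"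
    unfolding exp_mbeta_def using P by (intro msum_mult_right) auto
  also have "\<dots> = msum d (\<lambda>x. if x = l then complex_of_real (exp (- \<beta> * E l)) \<cdot>\<^sub>m P l else 0\<^sub>m d d)"
    using P by (intro arg_cong[where f = "msum d"] ext) (auto simp: mult_smult_assoc_mat[of _ d d _ d])
  also have "\<dots> = complex_of_real (exp (- \<beta> * E l)) \<cdot>\<^sub>m P l"
    using P by (intro msum_delta) auto
  finally show ?thesis .
qed

lemma trace_thermal_mult_projector:
  assumes "spectral_decomp d H E P"
  shows "trace (thermal d \<beta> E P * P l) = complex_of_real (exp (- \<beta> * E l) / partition_fn d \<beta> E P)"
proof -
  note P = spectral_decomp_projector[OF assms]
  have "thermal d \<beta> E P * P l
      = complex_of_real (1 / partition_fn d \<beta> E P) \<cdot>\<^sub>m (exp_mbeta d \<beta> E P * P l)"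
    unfolding thermal_def using P by (simp add: exp_mbeta_def mult_smult_assoc_mat[of _ d d _ d])
  then show ?thesis
    using P by (simp add: exp_mbeta_mult_projector[OF assms] trace_smult[of _ d])
qed

lemma prob_tr_thermal_kron:
  assumes A: "spectral_decomp dA HA EA PA" and B: "spectral_decomp dB HB EB PB"
  shows "prob_tr (kron (thermal dA \<beta> EA PA) (thermal dB \<beta> EB PB)) (kron (PA a) (PB b))
    = exp (- \<beta> * (EA a + EB b)) / (partition_fn dA \<beta> EA PA * partition_fn dB \<beta> EB PB)"
  unfolding prob_tr_def
  using trace_kron_mult[OF _ spectral_decomp_projector(1)[OF A] _ spectral_decomp_projector(1)[OF B]]
  by (simp add: trace_thermal_mult_projector[OF A] trace_thermal_mult_projector[OF B]
      distrib_left mult_exp_exp)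

lemma ln_prob_tr_thermal_kron:
  fixes \<beta> :: real and a :: "'a::finite" and b :: "'b::finite"
  assumes A: "spectral_decomp dA HA EA PA" and B: "spectral_decomp dB HB EB PB"
  defines "p \<equiv> prob_tr (kron (thermal dA \<beta> EA PA) (thermal dB \<beta> EB PB)) (kron (PA a) (PB b))"
  shows "0 < p"
    and "ln p = - \<beta> * (EA a + EB b) - ln (partition_fn dA \<beta> EA PA * partition_fn dB \<beta> EB PB)"
  using partition_fn_pos[OF A, of \<beta>] partition_fn_pos[OF B, of \<beta>]
  by (simp_all add: p_def prob_tr_thermal_kron[OF A B] ln_div)

lemma ln_add_factor:
  fixes a y :: real
  assumes "0 < a" and "0 < 1 + y / a"
  shows "0 < a + y" and "ln (a + y) = ln a + ln (1 + y / a)"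
proof -
  have "a + y = a * (1 + y / a)" using assms(1) by (simp add: field_simps)
  then show "0 < a + y" "ln (a + y) = ln a + ln (1 + y / a)"
    using assms by (simp_all add: ln_mult)
qed

theorem mainTheorem6:
  fixes dA dB :: nat and \<beta> :: real
    and HiA HfA HiB HfB :: "complex mat"
    and EiA :: "'la::finite \<Rightarrow> real" and PiA :: "'la \<Rightarrow> complex mat"
    and EfA :: "'ka::finite \<Rightarrow> real" and PfA :: "'ka \<Rightarrow> complex mat"
    and EiB :: "'lb::finite \<Rightarrow> real" and PiB :: "'lb \<Rightarrow> complex mat"
    and EfB :: "'kb::finite \<Rightarrow> real" and PfB :: "'kb \<Rightarrow> complex mat"
    and K :: "'al::finite \<Rightarrow> complex mat"
    and \<pi> S Sinv :: "complex mat"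
    and Ecor Etil :: "complex mat"
    and lA :: 'la and lB :: 'lb and kA :: 'ka and kB :: 'kb
  assumes "d = dA * dB"
    and "ZiA = partition_fn dA \<beta> EiA PiA" and "ZfA = partition_fn dA \<beta> EfA PfA"
    and "ZiB = partition_fn dB \<beta> EiB PiB" and "ZfB = partition_fn dB \<beta> EfB PfB"
    and "\<gamma>i = kron (thermal dA \<beta> EiA PiA) (thermal dB \<beta> EiB PiB)"
    and "\<gamma>f = kron (thermal dA \<beta> EfA PfA) (thermal dB \<beta> EfB PfB)"
    and "\<Delta>F = - (1 / \<beta>) * ln ((ZfA * ZfB) / (ZiA * ZiB))"
    and "Kt = (\<lambda>\<alpha>. S * mat_adjoint (K \<alpha>) * Sinv)"
    and "\<rho>i = \<gamma>i + Ecor" and "\<rho>ti = \<gamma>f + Etil"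
    and "Pil = kron (PiA lA) (PiB lB)" and "Pfk = kron (PfA kA) (PfB kB)"
    and "p_i = (\<lambda>X. prob_tr X Pil)"
    and "pf = (\<lambda>X. prob_tr (kraus_map d K X) Pfk)"
    and "pti = (\<lambda>X. prob_tr X Pfk)"
    and "ptf = (\<lambda>X. prob_tr (kraus_map d Kt X) Pil)"
    and "PG = p_i \<rho>i * pf \<rho>i" and "PGt = pti \<rho>ti * ptf \<rho>ti"
    and "\<Psi>i = ln (1 + p_i Ecor / p_i \<gamma>i)" and "\<Psi>f = ln (1 + pf Ecor / pf \<gamma>i)"
    and "\<Psi>ti = ln (1 + pti Etil / pti \<gamma>f)" and "\<Psi>tf = ln (1 + ptf Etil / ptf \<gamma>f)"
    and "\<Delta>\<Psi> = \<Psi>i + \<Psi>f - \<Psi>ti - \<Psi>tf"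
    and "\<Delta>\<sigma> = ln (pf \<gamma>i) - ln (ptf \<gamma>f)"
    and "\<Delta>E = EfA kA + EfB kB - EiA lA - EiB lB"
    and "0 < \<beta>"
    and "spectral_decomp dA HiA EiA PiA" and "spectral_decomp dA HfA EfA PfA"
    and "spectral_decomp dB HiB EiB PiB" and "spectral_decomp dB HfB EfB PfB"
    and "cptp_kraus d K"
    and "psd d \<pi>" and "invertible_mat \<pi>" and "kraus_map d K \<pi> = \<pi>"
    and "psd d S" and "S * S = \<pi>"
    and "Sinv \<in> carrier_mat d d" and "S * Sinv = 1\<^sub>m d" and "Sinv * S = 1\<^sub>m d"
    and "hermitian d Ecor" and "ptrace_A dA dB Ecor = 0\<^sub>m dB dB" and "ptrace_B dA dB Ecor = 0\<^sub>m dA dA"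
    and "hermitian d Etil" and "ptrace_A dA dB Etil = 0\<^sub>m dB dB" and "ptrace_B dA dB Etil = 0\<^sub>m dA dA"
    and "density d \<rho>i" and "density d \<rho>ti"
    \<comment> \<open>well-definedness of the quantities at (l,k)\<close>
    and "p_i \<gamma>i \<noteq> 0" and "pf \<gamma>i \<noteq> 0" and "pti \<gamma>f \<noteq> 0" and "ptf \<gamma>f \<noteq> 0"
    and "0 < 1 + p_i Ecor / p_i \<gamma>i" and "0 < 1 + pf Ecor / pf \<gamma>i"
    and "0 < 1 + pti Etil / pti \<gamma>f" and "0 < 1 + ptf Etil / ptf \<gamma>f"
    and "0 < pf \<gamma>i" and "0 < ptf \<gamma>f"
    and "PGt \<noteq> 0" and "0 < PG / PGt"
  shows "ln (PG / PGt) = \<beta> * (\<Delta>E - \<Delta>F) + \<Delta>\<sigma> + \<Delta>\<Psi>"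
proof -
  have K: "\<And>\<alpha>. K \<alpha> \<in> carrier_mat d d" using assms(32) by (simp add: cptp_kraus_def)
  have Kt: "\<And>\<alpha>. Kt \<alpha> \<in> carrier_mat d d"
    using assms(9,36,38) mat_adjoint_carrier_mat[OF K] by (auto simp: psd_def hermitian_def)
  have carriers: "\<gamma>i \<in> carrier_mat d d" "\<gamma>f \<in> carrier_mat d d" "Ecor \<in> carrier_mat d d"
    "Etil \<in> carrier_mat d d" "Pil \<in> carrier_mat d d" "Pfk \<in> carrier_mat d d"
    using assms(1,6,7,12,13,41,44) assms(28-31)[THEN spectral_decomp_projector(1)]
    by (simp_all add: kron_carrier_mat hermitian_def)
  have split: "p_i \<rho>i = p_i \<gamma>i + p_i Ecor" "pf \<rho>i = pf \<gamma>i + pf Ecor"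
    "pti \<rho>ti = pti \<gamma>f + pti Etil" "ptf \<rho>ti = ptf \<gamma>f + ptf Etil"
    using assms(10,11,14-17) carriers
    by (simp_all add: prob_tr_add[of _ d] kraus_map_add[of _ d] K Kt)
  have thermal_i: "0 < p_i \<gamma>i" "ln (p_i \<gamma>i) = - \<beta> * (EiA lA + EiB lB) - ln (ZiA * ZiB)"
    using ln_prob_tr_thermal_kron[OF assms(28,30)] assms(2,4,6,12,14) by simp_all
  have thermal_f: "0 < pti \<gamma>f" "ln (pti \<gamma>f) = - \<beta> * (EfA kA + EfB kB) - ln (ZfA * ZfB)"
    using ln_prob_tr_thermal_kron[OF assms(29,31)] assms(3,5,7,13,16) by simp_all
  have "0 < ZiA" "0 < ZfA" "0 < ZiB" "0 < ZfB"
    using assms(2-5) assms(28-31)[THEN partition_fn_pos] by simp_all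
  then have free_energy: "\<beta> * \<Delta>F = ln (ZiA * ZiB) - ln (ZfA * ZfB)"
    using assms(8,27) by (simp add: ln_div)
  note factor = ln_add_factor[OF thermal_i(1) assms(53)] ln_add_factor[OF assms(57,54)]
    ln_add_factor[OF thermal_f(1) assms(55)] ln_add_factor[OF assms(58,56)]
  have boltzmann: "\<beta> * (\<Delta>E - \<Delta>F) = ln (p_i \<gamma>i) - ln (pti \<gamma>f)"
    unfolding right_diff_distrib free_energy thermal_i(2) thermal_f(2) assms(26)
    by (simp add: algebra_simps)
  have "ln (PG / PGt)
      = ln (p_i \<gamma>i + p_i Ecor) + ln (pf \<gamma>i + pf Ecor) - ln (pti \<gamma>f + pti Etil) - ln (ptf \<gamma>f + ptf Etil)"
    using assms(18,19) factor by (simp add: split ln_div ln_mult)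
  then show ?thesis
    using assms(20-25) factor boltzmann by linarith
qed

end
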